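(* Fix a positive integer $m$ and let $1\le j\le m$. Let $\pi\sim\mathcal{S}_{m,n}$ be uniform, and let $T_j$ be the smallest index $t$ such that $\pi_t$ is the $j$-th occurrence of some card type in $\pi$ (equivalently, the largest $t$ such that $\{\pi_1,\dots,\pi_{t-1}\}$ contains no card type with multiplicity at least $j$). If $t=\gamma n^{1-1/j}$, where $\gamma>0$ may depend on $n$, then \[\Pr[T_j>t]=1-O(\gamma^{j})\quad\text{and}\quad \Pr[T_j>t]=O(\gamma^{-j}),\] where the implicit constants may depend on $m$.
   Context: $\mathcal{S}_{m,n}$ is the set of words over the alphabet $[n]=\{1,\dots,n\}$ in which each symbol appears exactly $m$ times; $\pi\sim\mathcal{S}_{m,n}$ denotes a uniformly random element, and $\pi_t$ its $t$-th letter. Asymptotic notation is as $n\to\infty$ with $m$ fixed. *)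

theory Defs
  imports "HOL-Probability.Probability"
begin

definition words :: "nat \<Rightarrow> nat \<Rightarrow> nat list set" where
  "words m n = {w. set w \<subseteq> {1..n} \<and> (\<forall>i\<in>{1..n}. count (mset w) i = m)}"

definition T :: "nat \<Rightarrow> nat list \<Rightarrow> nat" where
  "T j w = (LEAST t. 1 \<le> t \<and> t \<le> length w \<and>
              count (mset (take t w)) (w ! (t - 1)) = j)"

end

theory Submission
  imports Defs "HOL-Combinatorics.Multiset_Permutations"
begin

(* Let s = floor t. Then T_j > t exactly when X = 0, where X counts the pairs (i, J) of a card i
   and a j-set J of the first s positions all showing i. Counting permutations of the multiset
   with m copies of each card, a fixed j-set shows a fixed card with probability (m)_j / (mn)_j
   (falling factorials), so E X = n (s choose j) (m)_j / (mn)_j. This is at most gamma^j, and at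
   least a constant times gamma^j once s >= t/2 >= j; Markov's inequality gives
   Pr[T_j <= t] <= gamma^j. For the other tail, two disjoint j-sets showing different cards are
   nearly independent, as (mn)_j^2 <= (mn)_2j (1 + O(1/n)), while pairs with the same card
   contribute at most (m choose j) E X. The second moment method then bounds Pr[X = 0] by
   (m choose j) / E X + O(1/n) = O(gamma^-j). *)

section \<open>Falling factorials\<close>

definition falling_fact :: "nat \<Rightarrow> nat \<Rightarrow> nat" where
  "falling_fact a c = (\<Prod>k<c. a - k)"

lemma falling_fact_0 [simp]: "falling_fact a 0 = 1"
  by (simp add: falling_fact_def)

lemma falling_fact_Suc [simp]: "falling_fact a (Suc c) = falling_fact a c * (a - c)"
  by (simp add: falling_fact_def)

lemma falling_fact_pos: "c \<le> a \<Longrightarrow> 0 < falling_fact a c"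
  by (induction c) auto

lemma falling_fact_add: "falling_fact a (c + d) = falling_fact a c * falling_fact (a - c) d"
  by (induction d) (simp_all add: diff_diff_add)

lemma falling_fact_le_power: "falling_fact a c \<le> a ^ c"
  unfolding falling_fact_def by (rule order.trans[OF prod_mono[of _ _ "\<lambda>_. a"]]) auto

lemma falling_fact_mult_le: "falling_fact m c * n ^ c \<le> falling_fact (m * n) c"
proof -
  have "falling_fact m c * n ^ c = (\<Prod>k<c. (m - k) * n)"
    by (simp add: falling_fact_def prod.distrib)
  also have "\<dots> \<le> (\<Prod>k<c. m * n - k)"
    by (intro prod_mono) (cases "n = 0"; auto simp: diff_mult_distrib intro!: diff_le_mono2)
  finally show ?thesis by (simp add: falling_fact_def)
qed

lemma one_plus_power_le:
  fixes x :: real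
  assumes "0 \<le> x" "x \<le> 1"
  shows "(1 + x) ^ k \<le> 1 + (2 ^ k - 1) * x"
proof (induction k)
  case 0
  then show ?case by simp
next
  case (Suc k)
  have "(1 + x) ^ Suc k \<le> (1 + x) * (1 + (2 ^ k - 1) * x)"
    using Suc assms by (simp add: mult_left_mono)
  also have "\<dots> = 1 + 2 ^ k * x + (2 ^ k - 1) * x * x"
    by (simp add: algebra_simps)
  also have "\<dots> \<le> 1 + 2 ^ k * x + (2 ^ k - 1) * x"
    using assms by (simp add: mult_left_le)
  also have "\<dots> = 1 + (2 ^ Suc k - 1) * x"
    by (simp add: algebra_simps)
  finally show ?case .
qed

lemma real_falling_fact: "real (falling_fact a c) = (\<Prod>k<c. real (a - k))"
  by (simp add: falling_fact_def)

lemma falling_fact_square_le: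
  assumes "4 * c \<le> L"
  shows "(real (falling_fact L c))\<^sup>2 \<le> real (falling_fact L (2 * c)) * (1 + 2 ^ c * (2 * real c / real L))"
proof (cases "c = 0")
  case False
  define x :: real where "x = c / (L - 2 * c)"
  have gap: "real L - 2 * c > 0"
    using assms False by linarith
  have "real c * (4 * c) \<le> real c * L"
    using assms by (intro mult_left_mono) simp_all
  then have x_le: "x \<le> 2 * real c / real L"
    using gap by (simp add: x_def field_simps)
  have x_ge: "0 \<le> x"
    using gap by (simp add: x_def)
  have "2 * real c / real L \<le> (1 :: real)"
    using assms False by (simp add: field_simps)
  with x_le have x_le_1: "x \<le> 1"
    by linarith
  have "real (L - k) \<le> (1 + x) * real (L - c - k)" if "k < c" for k
  proof -
    have "x * (real L - 2 * c) \<le> x * real (L - c - k)"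
      using that assms x_ge by (intro mult_left_mono) simp_all
    moreover have "x * (real L - 2 * c) = c"
      using gap by (simp add: x_def)
    ultimately show ?thesis
      using that assms by (simp add: algebra_simps)
  qed
  then have "real (falling_fact L c) \<le> (\<Prod>k<c. (1 + x) * real (L - c - k))"
    unfolding real_falling_fact by (intro prod_mono) auto
  also have "\<dots> = (1 + x) ^ c * real (falling_fact (L - c) c)"
    by (simp add: real_falling_fact prod.distrib)
  finally have ratio: "real (falling_fact L c) \<le> (1 + x) ^ c * real (falling_fact (L - c) c)" .
  have "(real (falling_fact L c))\<^sup>2 \<le> real (falling_fact L c) * ((1 + x) ^ c * real (falling_fact (L - c) c))"
    unfolding power2_eq_square using ratio by (intro mult_left_mono) auto
  also have "\<dots> = real (falling_fact L (2 * c)) * (1 + x) ^ c"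
    by (simp add: mult_2 falling_fact_add)
  also have "\<dots> \<le> real (falling_fact L (2 * c)) * (1 + 2 ^ c * (2 * real c / real L))"
  proof (intro mult_left_mono)
    have "(1 + x) ^ c \<le> 1 + (2 ^ c - 1) * x"
      using one_plus_power_le x_ge x_le_1 by blast
    also have "\<dots> \<le> 1 + 2 ^ c * (2 * real c / real L)"
      using x_ge mult_left_mono[OF x_le, of "2 ^ c"] unfolding left_diff_distrib by simp
    finally show "(1 + x) ^ c \<le> 1 + 2 ^ c * (2 * real c / real L)" .
  qed simp
  finally show ?thesis .
qed simp

section \<open>Permutations of a multiset with prescribed letters\<close>

lemma sum_card_permutations_of_multiset_remove:
  assumes "A \<noteq> {#}"
  shows "(\<Sum>x\<in>set_mset A. card (permutations_of_multiset (A - {#x#}))) = card (permutations_of_multiset A)"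
  unfolding permutations_of_multiset_nonempty[OF assms]
  by (subst card_UN_disjoint) (auto simp: card_image)

lemma subset_mset_diff_single_iff:
  assumes "B \<subseteq># A" "x \<in># A"
  shows "B \<subseteq># A - {#x#} \<longleftrightarrow> x \<in># A - B"
proof
  assume "B \<subseteq># A - {#x#}"
  then have "count B x \<le> count A x - 1"
    unfolding subseteq_mset_def by (metis count_diff count_single)
  moreover have "0 < count A x"
    using assms(2) by simp
  ultimately have "count B x < count A x"
    by linarith
  then show "x \<in># A - B"
    by (simp add: in_diff_count)
next
  assume "x \<in># A - B"
  show "B \<subseteq># A - {#x#}"
  proof (rule mset_subset_eqI)
    fix y
    show "count B y \<le> count (A - {#x#}) y"
      using \<open>x \<in># A - B\<close> mset_subset_eq_count[OF assms(1), of y]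
      by (cases "y = x") (auto simp: in_diff_count)
  qed
qed

lemma card_permutations_of_multiset_diff:
  assumes "B \<subseteq># A" "finite S" "set_mset A \<subseteq> S"
  shows "card (permutations_of_multiset (A - B)) * falling_fact (size A) (size B)
       = card (permutations_of_multiset A) * (\<Prod>x\<in>S. falling_fact (count A x) (count B x))"
  using assms(1)
proof (induction B)
  case empty
  then show ?case by simp
next
  case (add x B)
  have B: "B \<subseteq># A"
    using add.prems by (meson mset_subset_eq_insertD subset_mset.less_imp_le)
  have x: "x \<in># A - B"
    using mset_subset_eq_count[OF add.prems, of x] by (simp add: in_diff_count)
  have x_in_S: "x \<in> S" using x assms(3) by (auto dest: in_diffD)
  have size: "size (A - B) = size A - size B"
    using B by (simp add: size_Diff_submset)
  have others: "(\<Prod>y\<in>S - {x}. falling_fact (count A y) (count (add_mset x B) y))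
      = (\<Prod>y\<in>S - {x}. falling_fact (count A y) (count B y))"
    by (intro prod.cong) auto
  have "card (permutations_of_multiset (A - add_mset x B)) * falling_fact (size A) (size (add_mset x B))
      = (size (A - B) * card (permutations_of_multiset (A - B - {#x#}))) * falling_fact (size A) (size B)"
    by (simp add: size)
  also have "\<dots> = card (permutations_of_multiset (A - B)) * falling_fact (size A) (size B) * count (A - B) x"
    using card_permutations_of_multiset_remove_aux[OF x] by simp
  also have "\<dots> = card (permutations_of_multiset A)
      * (\<Prod>y\<in>S. falling_fact (count A y) (count B y)) * (count A x - count B x)"
    by (simp add: add.IH[OF B])
  also have "\<dots> = card (permutations_of_multiset A)
      * (\<Prod>y\<in>S. falling_fact (count A y) (count (add_mset x B) y))"
    unfolding prod.remove[OF assms(2) x_in_S] others by simp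
  finally show ?case .
qed

definition matches_pattern :: "'a option list \<Rightarrow> 'a list \<Rightarrow> bool" where
  "matches_pattern ps w \<longleftrightarrow> list_all2 (\<lambda>p x. p = None \<or> p = Some x) ps w"

lemma matches_pattern_Nil [simp]: "matches_pattern [] w \<longleftrightarrow> w = []"
  by (simp add: matches_pattern_def)

lemma matches_pattern_Cons:
  "matches_pattern (p # ps) w \<longleftrightarrow> (\<exists>x u. w = x # u \<and> (p = None \<or> p = Some x) \<and> matches_pattern ps u)"
  by (auto simp: matches_pattern_def list_all2_Cons1)

lemma card_permutations_of_multiset_matching:
  fixes ps :: "'a option list"
  defines "F \<equiv> mset ([x. Some x \<leftarrow> ps])"
  assumes length: "length ps = size A"
  shows "card {w \<in> permutations_of_multiset A. matches_pattern ps w}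
       = (if F \<subseteq># A then card (permutations_of_multiset (A - F)) else 0)"
  using length unfolding F_def
proof (induction ps arbitrary: A)
  case Nil
  then show ?case by simp
next
  case (Cons p ps)
  let ?F = "mset ([x. Some x \<leftarrow> ps])"
  let ?count = "\<lambda>A. if ?F \<subseteq># A then card (permutations_of_multiset (A - ?F)) else 0"
  have split: "{w \<in> permutations_of_multiset A. matches_pattern (p # ps) w}
      = (\<Union>x\<in>set_mset A. (#) x ` {u \<in> permutations_of_multiset (A - {#x#}).
                                     matches_pattern ps u \<and> (p = None \<or> p = Some x)})"
    by (fastforce simp: permutations_of_multiset_Cons_iff matches_pattern_Cons)
  have "card {w \<in> permutations_of_multiset A. matches_pattern (p # ps) w}
      = (\<Sum>x\<in>set_mset A. card {u \<in> permutations_of_multiset (A - {#x#}).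
                                   matches_pattern ps u \<and> (p = None \<or> p = Some x)})"
    unfolding split by (subst card_UN_disjoint) (auto simp: card_image)
  also have "\<dots> = (\<Sum>x\<in>set_mset A. if p = None \<or> p = Some x then ?count (A - {#x#}) else 0)"
    using Cons.prems by (intro sum.cong refl) (simp add: Cons.IH size_Diff_singleton)
  also have "\<dots> = (if mset [x. Some x \<leftarrow> p # ps] \<subseteq># A
                    then card (permutations_of_multiset (A - mset [x. Some x \<leftarrow> p # ps])) else 0)"
  proof (cases p)
    case None
    show ?thesis
    proof (cases "?F \<subseteq># A")
      case True
      have "size ?F \<le> length ps"
        by (induction ps rule: list.induct) (auto split: option.split)
      then have "size (A - ?F) > 0"
        using True Cons.prems by (simp add: size_Diff_submset)
      then have "A - ?F \<noteq> {#}"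
        by auto
      have "(\<Sum>x\<in>set_mset A. ?count (A - {#x#}))
          = (\<Sum>x\<in>set_mset A. if x \<in># A - ?F then card (permutations_of_multiset (A - ?F - {#x#})) else 0)"
        using True by (intro sum.cong refl) (simp add: subset_mset_diff_single_iff diff_right_commute)
      also have "\<dots> = (\<Sum>x\<in>set_mset (A - ?F).
                           if x \<in># A - ?F then card (permutations_of_multiset (A - ?F - {#x#})) else 0)"
        by (rule sum.mono_neutral_right) (auto dest: in_diffD)
      also have "\<dots> = (\<Sum>x\<in>set_mset (A - ?F). card (permutations_of_multiset (A - ?F - {#x#})))"
        by simp
      also have "\<dots> = card (permutations_of_multiset (A - ?F))"
        by (rule sum_card_permutations_of_multiset_remove) fact
      finally show ?thesis using None True by simp
    next
      case False
      then have "\<not> ?F \<subseteq># A - {#x#}" for x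
        by (meson diff_subset_eq_self subset_mset.order_trans)
      then show ?thesis using None False by simp
    qed
  next
    case (Some y)
    have "(\<Sum>x\<in>set_mset A. if x = y then ?count (A - {#x#}) else 0) = (if y \<in># A then ?count (A - {#y#}) else 0)"
      by simp
    then show ?thesis using Some by (simp add: insert_subset_eq_iff)
  qed
  finally show ?case .
qed

lemma matches_pattern_fixed_positions:
  assumes "length w = k" "P \<subseteq> {..<k}"
  shows "matches_pattern (map (\<lambda>p. if p \<in> P then Some (f p) else None) [0..<k]) w
     \<longleftrightarrow> (\<forall>p\<in>P. w ! p = f p)"
  using assms by (auto simp: matches_pattern_def list_all2_conv_all_nth)

lemma fixed_letters_fixed_positions:
  "[x. Some x \<leftarrow> map (\<lambda>p. if p \<in> P then Some (f p) else None) xs] = map f (filter (\<lambda>p. p \<in> P) xs)"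
  by (induction xs) auto

lemma card_permutations_of_multiset_fixed_positions:
  fixes f :: "nat \<Rightarrow> 'a"
  assumes "P \<subseteq> {..<size A}"
  defines "F \<equiv> image_mset f (mset_set P)"
  shows "card {w \<in> permutations_of_multiset A. \<forall>p\<in>P. w ! p = f p}
       = (if F \<subseteq># A then card (permutations_of_multiset (A - F)) else 0)"
proof -
  define ps where "ps = map (\<lambda>p. if p \<in> P then Some (f p) else None) [0..<size A]"
  have "{w \<in> permutations_of_multiset A. \<forall>p\<in>P. w ! p = f p}
      = {w \<in> permutations_of_multiset A. matches_pattern ps w}"
    using assms(1) unfolding ps_def
    by (auto simp: matches_pattern_fixed_positions permutations_of_multiset_def)
  moreover have "mset (filter (\<lambda>p. p \<in> P) [0..<size A]) = mset_set P"
  proof -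
    have "set (filter (\<lambda>p. p \<in> P) [0..<size A]) = P"
      using assms(1) by auto
    then show ?thesis
      by (metis distinct_filter distinct_upt mset_set_set)
  qed
  then have "mset [x. Some x \<leftarrow> ps] = F"
    unfolding ps_def F_def fixed_letters_fixed_positions by simp
  ultimately show ?thesis
    using card_permutations_of_multiset_matching[of ps A] by (simp add: ps_def)
qed

section \<open>Double counting and the second moment method\<close>

lemma sum_card_filter_swap:
  assumes "finite A" "finite B"
  shows "(\<Sum>a\<in>A. card {b\<in>B. R a b}) = (\<Sum>b\<in>B. card {a\<in>A. R a b})"
proof -
  have "card {b\<in>B. R a b} = (\<Sum>b\<in>B. of_bool (R a b))" for a
    using assms(2) by (simp add: Collect_conj_eq Int_commute)
  moreover have "card {a\<in>A. R a b} = (\<Sum>a\<in>A. of_bool (R a b))" for b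
    using assms(1) by (simp add: Collect_conj_eq Int_commute)
  ultimately show ?thesis
    by (simp add: sum.swap[of _ A])
qed

lemma card_nonzero_le_sum:
  fixes f :: "'a \<Rightarrow> nat"
  assumes "finite A"
  shows "card {a\<in>A. f a \<noteq> 0} \<le> sum f A"
proof -
  have "card {a\<in>A. f a \<noteq> 0} = (\<Sum>a\<in>{a\<in>A. f a \<noteq> 0}. 1)"
    by simp
  also have "\<dots> \<le> (\<Sum>a\<in>{a\<in>A. f a \<noteq> 0}. f a)"
    by (intro sum_mono) auto
  also have "\<dots> \<le> sum f A"
    using assms by (intro sum_mono2) auto
  finally show ?thesis .
qed

lemma card_zero_le_second_moment:
  fixes X :: "'a \<Rightarrow> real" and \<mu> a \<epsilon> :: real
  assumes "finite W" "\<mu> > 0"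
    and sum: "(\<Sum>w\<in>W. X w) = card W * \<mu>"
    and sum_square: "(\<Sum>w\<in>W. X w ^ 2) \<le> card W * (a * \<mu> + (1 + \<epsilon>) * \<mu>\<^sup>2)"
  shows "card {w\<in>W. X w = 0} \<le> card W * (a / \<mu> + \<epsilon>)"
proof -
  have "card {w\<in>W. X w = 0} * \<mu>\<^sup>2 = (\<Sum>w\<in>{w\<in>W. X w = 0}. (X w - \<mu>)\<^sup>2)"
    by simp
  also have "\<dots> \<le> (\<Sum>w\<in>W. (X w - \<mu>)\<^sup>2)"
    using assms(1) by (intro sum_mono2) auto
  also have "\<dots> = (\<Sum>w\<in>W. X w ^ 2 - 2 * \<mu> * X w + \<mu>\<^sup>2)"
    by (simp add: power2_eq_square algebra_simps)
  also have "\<dots> = (\<Sum>w\<in>W. X w ^ 2) - 2 * \<mu> * (\<Sum>w\<in>W. X w) + card W * \<mu>\<^sup>2"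
    by (simp add: sum.distrib sum_subtractf flip: sum_distrib_left)
  also have "\<dots> = (\<Sum>w\<in>W. X w ^ 2) - card W * \<mu>\<^sup>2"
    using sum by (simp add: power2_eq_square)
  also have "\<dots> \<le> card W * (a * \<mu> + \<epsilon> * \<mu>\<^sup>2)"
    using sum_square by (simp add: algebra_simps)
  also have "\<dots> = card W * (a / \<mu> + \<epsilon>) * \<mu>\<^sup>2"
    using assms(2) by (simp add: field_simps power2_eq_square)
  finally show ?thesis
    using assms(2) by simp
qed

section \<open>Uniform words as permutations of a deck\<close>

definition deck :: "nat \<Rightarrow> nat \<Rightarrow> nat multiset" where
  "deck m n = repeat_mset m (mset_set {1..n})"

lemma count_deck: "count (deck m n) x = (if x \<in> {1..n} then m else 0)"
  by (simp add: deck_def)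

lemma size_deck [simp]: "size (deck m n) = m * n"
  by (simp add: deck_def)

lemma set_mset_deck_subset: "set_mset (deck m n) \<subseteq> {1..n}"
  by (auto simp: count_deck simp flip: count_greater_zero_iff split: if_splits)

lemma words_eq_permutations_of_multiset: "words m n = permutations_of_multiset (deck m n)"
proof (intro set_eqI iffI)
  fix w assume "w \<in> words m n"
  then have "count (mset w) x = count (deck m n) x" for x
    by (auto simp: words_def count_deck count_eq_zero_iff)
  then show "w \<in> permutations_of_multiset (deck m n)"
    by (simp add: permutations_of_multiset_def multiset_eqI)
next
  fix w assume "w \<in> permutations_of_multiset (deck m n)"
  then have "mset w = deck m n"
    by (rule permutations_of_multisetD)
  then show "w \<in> words m n"
    using set_mset_deck_subset[of m n] by (simp add: words_def count_deck flip: set_mset_mset)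
qed

lemma finite_words: "finite (words m n)"
  by (simp add: words_eq_permutations_of_multiset)

lemma words_nonempty: "words m n \<noteq> {}"
  by (simp add: words_eq_permutations_of_multiset)

lemma length_words: "w \<in> words m n \<Longrightarrow> length w = m * n"
  by (metis permutations_of_multisetD size_deck size_mset words_eq_permutations_of_multiset)

lemma card_words_fixed_positions:
  fixes f :: "nat \<Rightarrow> nat"
  assumes "P \<subseteq> {..<m * n}" and "image_mset f (mset_set P) \<subseteq># deck m n"
  shows "card {w \<in> words m n. \<forall>p\<in>P. w ! p = f p} * falling_fact (m * n) (card P)
       = card (words m n) * (\<Prod>x\<in>{1..n}. falling_fact m (count (image_mset f (mset_set P)) x))"
proof -
  let ?F = "image_mset f (mset_set P)"
  have "card {w \<in> words m n. \<forall>p\<in>P. w ! p = f p} = card (permutations_of_multiset (deck m n - ?F))"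
    using card_permutations_of_multiset_fixed_positions[of P "deck m n" f] assms
    by (simp add: words_eq_permutations_of_multiset)
  moreover have "(\<Prod>x\<in>{1..n}. falling_fact (count (deck m n) x) (count ?F x))
               = (\<Prod>x\<in>{1..n}. falling_fact m (count ?F x))"
    by (intro prod.cong) (auto simp: count_deck)
  moreover have "size ?F = card P"
    by simp
  ultimately show ?thesis
    using card_permutations_of_multiset_diff[OF assms(2) finite_atLeastAtMost set_mset_deck_subset]
    by (simp add: words_eq_permutations_of_multiset)
qed

lemma card_words_constant_on:
  assumes "J \<subseteq> {..<m * n}" "card J = j" "j \<le> m" "i \<in> {1..n}"
  shows "card {w \<in> words m n. \<forall>p\<in>J. w ! p = i} * falling_fact (m * n) j
       = card (words m n) * falling_fact m j"
proof -
  have F: "image_mset (\<lambda>_. i) (mset_set J) = replicate_mset j i"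
    using assms(2) by (simp add: image_mset_const_eq)
  have "replicate_mset j i \<subseteq># deck m n"
    using assms(3,4) by (auto simp: subseteq_mset_def count_deck)
  moreover have "(\<Prod>x\<in>{1..n}. falling_fact m (count (replicate_mset j i) x)) = falling_fact m j"
  proof -
    have "falling_fact m (count (replicate_mset j i) x) = (if x = i then falling_fact m j else 1)" for x
      by simp
    then show ?thesis
      using assms(4) by simp
  qed
  ultimately show ?thesis
    using card_words_fixed_positions[of J m n "\<lambda>_. i"] assms(1,2) F by simp
qed

lemma card_words_constant_on_two:
  assumes "J \<subseteq> {..<m * n}" "J' \<subseteq> {..<m * n}" "J \<inter> J' = {}"
    and "card J = j" "card J' = k" "j \<le> m" "k \<le> m" "i \<in> {1..n}" "i' \<in> {1..n}" "i \<noteq> i'"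
  shows "card {w \<in> words m n. (\<forall>p\<in>J. w ! p = i) \<and> (\<forall>p\<in>J'. w ! p = i')} * falling_fact (m * n) (j + k)
       = card (words m n) * falling_fact m j * falling_fact m k"
proof -
  define f where "f p = (if p \<in> J then i else i')" for p
  have fin: "finite J" "finite J'"
    using assms(1,2) finite_subset by auto
  have "image_mset f (mset_set J) = image_mset (\<lambda>_. i) (mset_set J)"
    by (rule image_mset_cong) (simp add: f_def fin)
  moreover have "image_mset f (mset_set J') = image_mset (\<lambda>_. i') (mset_set J')"
    using assms(3) by (intro image_mset_cong) (auto simp: f_def fin)
  ultimately have "image_mset f (mset_set J) = replicate_mset j i"
    and "image_mset f (mset_set J') = replicate_mset k i'"
    using assms(4,5) by (simp_all add: image_mset_const_eq)
  then have F: "image_mset f (mset_set (J \<union> J')) = replicate_mset j i + replicate_mset k i'"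
    by (simp add: mset_set_Union[OF fin assms(3)])
  have "replicate_mset j i + replicate_mset k i' \<subseteq># deck m n"
    using assms(6-10) by (auto simp: subseteq_mset_def count_deck)
  moreover have "(\<Prod>x\<in>{1..n}. falling_fact m (count (replicate_mset j i + replicate_mset k i') x))
               = falling_fact m j * falling_fact m k"
  proof -
    have "falling_fact m (count (replicate_mset j i + replicate_mset k i') x)
        = (if x = i then falling_fact m j else 1) * (if x = i' then falling_fact m k else 1)" for x
      using assms(10) by auto
    then show ?thesis
      using assms(8,9) by (simp add: prod.distrib)
  qed
  moreover have "{w \<in> words m n. (\<forall>p\<in>J. w ! p = i) \<and> (\<forall>p\<in>J'. w ! p = i')}
               = {w \<in> words m n. \<forall>p\<in>J \<union> J'. w ! p = f p}"
    using assms(3) by (auto simp: f_def)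
  moreover have "card (J \<union> J') = j + k"
    using assms(3-5) fin by (simp add: card_Un_disjoint)
  ultimately show ?thesis
    using card_words_fixed_positions[of "J \<union> J'" m n f] assms(1,2) F by simp
qed

lemma prob_words: "measure_pmf.prob (pmf_of_set (words m n)) A = card (words m n \<inter> A) / card (words m n)"
  by (simp add: measure_pmf_of_set finite_words words_nonempty)

section \<open>The stopping time\<close>

lemma count_take_eq_card: "count (mset (take s w)) i = card {p. p < min s (length w) \<and> w ! p = i}"
proof -
  have "count (mset (take s w)) i = card {p. p < length (take s w) \<and> i = take s w ! p}"
    by (simp add: count_mset count_list_eq_length_filter length_filter_conv_card)
  also have "{p. p < length (take s w) \<and> i = take s w ! p} = {p. p < min s (length w) \<and> w ! p = i}"
    by auto
  finally show ?thesis .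
qed

lemma le_count_take_iff:
  "j \<le> count (mset (take s w)) i
     \<longleftrightarrow> (\<exists>J \<subseteq> {..<min s (length w)}. card J = j \<and> (\<forall>p\<in>J. w ! p = i))"
proof
  assume "j \<le> count (mset (take s w)) i"
  then obtain J where "J \<subseteq> {p. p < min s (length w) \<and> w ! p = i}" "card J = j"
    using obtain_subset_with_card_n by (metis count_take_eq_card)
  then show "\<exists>J \<subseteq> {..<min s (length w)}. card J = j \<and> (\<forall>p\<in>J. w ! p = i)"
    by (intro exI[of _ J]) auto
next
  assume "\<exists>J \<subseteq> {..<min s (length w)}. card J = j \<and> (\<forall>p\<in>J. w ! p = i)"
  then obtain J where J: "J \<subseteq> {..<min s (length w)}" "card J = j" "\<forall>p\<in>J. w ! p = i"
    by blast
  then have "J \<subseteq> {p. p < min s (length w) \<and> w ! p = i}"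
    by auto
  moreover have "finite {p. p < min s (length w) \<and> w ! p = i}"
    by simp
  ultimately show "j \<le> count (mset (take s w)) i"
    unfolding count_take_eq_card using card_mono J(2) by blast
qed

lemma count_take_mono:
  assumes "s \<le> s'"
  shows "count (mset (take s w)) i \<le> count (mset (take s' w)) i"
proof -
  have "mset (take s' w) = mset (take s (take s' w)) + mset (drop s (take s' w))"
    by (metis append_take_drop_id mset_append)
  also have "take s (take s' w) = take s w"
    using assms by (simp add: min_absorb1)
  finally show ?thesis
    by simp
qed

lemma jth_occurrence_exists:
  assumes "1 \<le> j" "j \<le> count (mset (take s w)) i"
  shows "\<exists>t\<le>s. 1 \<le> t \<and> t \<le> length w \<and> count (mset (take t w)) (w ! (t - 1)) = j"
  using assms(2)
proof (induction s)
  case 0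
  with assms(1) show ?case
    by simp
next
  case (Suc s)
  show ?case
  proof (cases "j \<le> count (mset (take s w)) i")
    case True
    then obtain t where "t \<le> s" "1 \<le> t \<and> t \<le> length w \<and> count (mset (take t w)) (w ! (t - 1)) = j"
      using Suc.IH by blast
    then show ?thesis
      using le_SucI by blast
  next
    case False
    then have "take (Suc s) w \<noteq> take s w"
      using Suc.prems by auto
    then have s: "s < length w"
      by (rule contrapos_np) (simp add: not_less)
    then have "take (Suc s) w = take s w @ [w ! s]"
      by (rule take_Suc_conv_app_nth)
    then have "count (mset (take (Suc s) w)) i = count (mset (take s w)) i + (if w ! s = i then 1 else 0)"
      by simp
    then have "w ! s = i" and "count (mset (take (Suc s) w)) i = j"
      using Suc.prems False by (auto split: if_splits)
    then show ?thesis
      using s by (intro exI[of _ "Suc s"]) simp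
  qed
qed

(* The hypothesis makes the LEAST in the definition of T range over a nonempty set. *)
lemma T_le_iff:
  assumes "1 \<le> j" "j \<le> count (mset w) i\<^sub>0"
  shows "T j w \<le> s \<longleftrightarrow> (\<exists>i. j \<le> count (mset (take s w)) i)"
proof -
  let ?hit = "\<lambda>t. 1 \<le> t \<and> t \<le> length w \<and> count (mset (take t w)) (w ! (t - 1)) = j"
  have T_eq: "T j w = (LEAST t. ?hit t)"
    by (simp add: T_def)
  show ?thesis
  proof
    assume "T j w \<le> s"
    have "\<exists>t. ?hit t"
      using jth_occurrence_exists[of j "length w" w i\<^sub>0] assms by auto
    then have "?hit (T j w)"
      unfolding T_eq by (rule LeastI_ex)
    then have "j \<le> count (mset (take s w)) (w ! (T j w - 1))"
      using count_take_mono[OF \<open>T j w \<le> s\<close>, of w "w ! (T j w - 1)"] by (elim conjE) linarith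
    then show "\<exists>i. j \<le> count (mset (take s w)) i" ..
  next
    assume "\<exists>i. j \<le> count (mset (take s w)) i"
    then obtain i where "j \<le> count (mset (take s w)) i" ..
    from jth_occurrence_exists[OF assms(1) this]
    obtain t where "t \<le> s" "?hit t"
      by blast
    moreover from \<open>?hit t\<close> have "T j w \<le> t"
      unfolding T_eq by (rule Least_le)
    ultimately show "T j w \<le> s"
      by linarith
  qed
qed

lemma real_le_iff_le_nat_floor: "0 \<le> t \<Longrightarrow> real k \<le> t \<longleftrightarrow> k \<le> nat \<lfloor>t\<rfloor>"
  by (simp add: le_nat_iff le_floor_iff)

lemma T_gt_iff_no_repeat:
  assumes "w \<in> words m n" "1 \<le> j" "j \<le> m" "1 \<le> n" "0 \<le> t"
  shows "t < real (T j w) \<longleftrightarrow> (\<forall>i. count (mset (take (nat \<lfloor>t\<rfloor>) w)) i < j)"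
proof -
  have "j \<le> count (mset w) 1"
    using assms(1,3,4) by (simp add: words_def)
  then show ?thesis
    using T_le_iff[OF assms(2)] real_le_iff_le_nat_floor[OF assms(5)] by (metis not_le)
qed

lemma prob_T_gt_eq:
  assumes "1 \<le> j" "j \<le> m" "1 \<le> n" "0 \<le> t"
  shows "measure_pmf.prob (pmf_of_set (words m n)) {w. t < real (T j w)}
       = measure_pmf.prob (pmf_of_set (words m n)) {w. \<forall>i. count (mset (take (nat \<lfloor>t\<rfloor>) w)) i < j}"
proof -
  have "words m n \<inter> {w. t < real (T j w)}
      = words m n \<inter> {w. \<forall>i. count (mset (take (nat \<lfloor>t\<rfloor>) w)) i < j}"
    using T_gt_iff_no_repeat[OF _ assms] by blast
  then show ?thesis
    by (simp add: prob_words)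
qed

lemma take_words_min: "w \<in> words m n \<Longrightarrow> take s w = take (min s (m * n)) w"
  by (simp add: length_words min_def)

section \<open>Monochromatic sets of positions\<close>

definition monochromatic_subsets :: "nat \<Rightarrow> nat \<Rightarrow> nat list \<Rightarrow> nat \<Rightarrow> nat set set" where
  "monochromatic_subsets j s w i = {J. J \<subseteq> {..<s} \<and> card J = j \<and> (\<forall>p\<in>J. w ! p = i)}"

definition monochromatic_count :: "nat \<Rightarrow> nat \<Rightarrow> nat \<Rightarrow> nat list \<Rightarrow> nat" where
  "monochromatic_count n j s w = (\<Sum>i\<in>{1..n}. card (monochromatic_subsets j s w i))"

lemma finite_monochromatic_subsets: "finite (monochromatic_subsets j s w i)"
  unfolding monochromatic_subsets_def by (rule finite_subset[of _ "Pow {..<s}"]) auto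

lemma card_monochromatic_subsets_le:
  assumes "w \<in> words m n" "i \<in> {1..n}" "s \<le> m * n"
  shows "card (monochromatic_subsets j s w i) \<le> m choose j"
proof -
  define Q where "Q = {p. p < length w \<and> w ! p = i}"
  have "card Q = m"
    using count_take_eq_card[of "length w" w i] assms by (simp add: Q_def words_def)
  have "monochromatic_subsets j s w i \<subseteq> {J. J \<subseteq> Q \<and> card J = j}"
    using assms(1,3) by (auto simp: monochromatic_subsets_def Q_def length_words)
  then have "card (monochromatic_subsets j s w i) \<le> card {J. J \<subseteq> Q \<and> card J = j}"
    by (intro card_mono) (auto simp: Q_def)
  also have "\<dots> = m choose j"
    using n_subsets[of Q j] \<open>card Q = m\<close> by (simp add: Q_def)
  finally show ?thesis .
qed

lemma monochromatic_subsets_eq_filter: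
  "monochromatic_subsets j s w i = {J \<in> {J. J \<subseteq> {..<s} \<and> card J = j}. \<forall>p\<in>J. w ! p = i}"
  by (auto simp: monochromatic_subsets_def)

lemma card_subsets_lessThan: "card {J. J \<subseteq> {..<s} \<and> card J = j} = s choose j"
  using n_subsets[of "{..<s}" j] by simp

lemma sum_card_monochromatic_subsets:
  assumes "s \<le> m * n" "j \<le> m" "i \<in> {1..n}"
  shows "(\<Sum>w\<in>words m n. card (monochromatic_subsets j s w i)) * falling_fact (m * n) j
       = (s choose j) * card (words m n) * falling_fact m j"
proof -
  let ?S = "{J. J \<subseteq> {..<s} \<and> card J = j}"
  have "(\<Sum>w\<in>words m n. card (monochromatic_subsets j s w i))
      = (\<Sum>J\<in>?S. card {w \<in> words m n. \<forall>p\<in>J. w ! p = i})"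
    unfolding monochromatic_subsets_eq_filter
    by (rule sum_card_filter_swap) (auto simp: finite_words)
  moreover have "card {w \<in> words m n. \<forall>p\<in>J. w ! p = i} * falling_fact (m * n) j
               = card (words m n) * falling_fact m j" if "J \<in> ?S" for J
    using that assms by (intro card_words_constant_on) auto
  ultimately show ?thesis
    by (simp add: sum_distrib_right card_subsets_lessThan)
qed

(* Overlapping position sets cannot show two different cards, and disjoint ones show them with
   probability (m)_j^2 / (mn)_2j, nearly the product of the single probabilities. *)
lemma sum_product_monochromatic_subsets_le:
  assumes "s \<le> m * n" "j \<le> m" "i \<in> {1..n}" "i' \<in> {1..n}" "i \<noteq> i'"
  shows "(\<Sum>w\<in>words m n. card (monochromatic_subsets j s w i) * card (monochromatic_subsets j s w i'))
           * falling_fact (m * n) (2 * j)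
       \<le> (s choose j)\<^sup>2 * card (words m n) * (falling_fact m j)\<^sup>2"
proof -
  let ?S = "{J. J \<subseteq> {..<s} \<and> card J = j}"
  let ?mono = "\<lambda>w (J, J'). (\<forall>p\<in>J. w ! p = i) \<and> (\<forall>p\<in>J'. w ! p = i')"
  have "monochromatic_subsets j s w i \<times> monochromatic_subsets j s w i' = {JJ' \<in> ?S \<times> ?S. ?mono w JJ'}" for w
    by (auto simp: monochromatic_subsets_def)
  then have product: "card (monochromatic_subsets j s w i) * card (monochromatic_subsets j s w i')
      = card {JJ' \<in> ?S \<times> ?S. ?mono w JJ'}" for w
    by (metis card_cartesian_product)
  have swap: "(\<Sum>w\<in>words m n. card (monochromatic_subsets j s w i) * card (monochromatic_subsets j s w i'))
      = (\<Sum>JJ'\<in>?S \<times> ?S. card {w \<in> words m n. ?mono w JJ'})"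
    unfolding product by (rule sum_card_filter_swap) (auto simp: finite_words)
  have pair_bound: "card {w \<in> words m n. ?mono w JJ'} * falling_fact (m * n) (2 * j)
               \<le> card (words m n) * (falling_fact m j)\<^sup>2" if "JJ' \<in> ?S \<times> ?S" for JJ'
  proof (cases JJ')
    case (Pair J J')
    show ?thesis
    proof (cases "J \<inter> J' = {}")
      case True
      have "J \<subseteq> {..<m * n}" "J' \<subseteq> {..<m * n}" "card J = j" "card J' = j"
        using that Pair assms(1) by auto
      from card_words_constant_on_two[OF this(1,2) True this(3,4) assms(2,2,3,4,5)]
      show ?thesis
        by (simp add: Pair power2_eq_square mult_2 mult.assoc)
    next
      case False
      then have "{w \<in> words m n. ?mono w JJ'} = {}"
        using Pair assms(5) by auto
      then show ?thesis
        by (metis card.empty mult_is_0 zero_le)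
    qed
  qed
  have "(\<Sum>JJ'\<in>?S \<times> ?S. card {w \<in> words m n. ?mono w JJ'}) * falling_fact (m * n) (2 * j)
      \<le> (\<Sum>JJ'\<in>?S \<times> ?S. card (words m n) * (falling_fact m j)\<^sup>2)"
    unfolding sum_distrib_right by (rule sum_mono) (rule pair_bound)
  also have "\<dots> = (s choose j)\<^sup>2 * card (words m n) * (falling_fact m j)\<^sup>2"
    by (simp add: card_cartesian_product card_subsets_lessThan power2_eq_square)
  finally show ?thesis
    unfolding swap .
qed

lemma monochromatic_count_ne_0_iff:
  "monochromatic_count n j s w \<noteq> 0 \<longleftrightarrow> (\<exists>i\<in>{1..n}. monochromatic_subsets j s w i \<noteq> {})"
  by (simp add: monochromatic_count_def finite_monochromatic_subsets)

lemma repeat_iff_monochromatic_count: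
  assumes "w \<in> words m n" "1 \<le> j" "s \<le> m * n"
  shows "(\<exists>i. j \<le> count (mset (take s w)) i) \<longleftrightarrow> monochromatic_count n j s w \<noteq> 0"
proof -
  have len: "min s (length w) = s"
    using assms(1,3) by (simp add: length_words)
  have "(\<exists>i. j \<le> count (mset (take s w)) i) \<longleftrightarrow> (\<exists>i. monochromatic_subsets j s w i \<noteq> {})"
    unfolding le_count_take_iff len by (auto simp: monochromatic_subsets_def)
  also have "\<dots> \<longleftrightarrow> (\<exists>i\<in>{1..n}. monochromatic_subsets j s w i \<noteq> {})"
  proof (intro iffI; elim bexE exE)
    fix i assume "monochromatic_subsets j s w i \<noteq> {}"
    then obtain J where J: "J \<subseteq> {..<s}" "card J = j" "\<forall>p\<in>J. w ! p = i"
      by (auto simp: monochromatic_subsets_def)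
    then obtain p where "p \<in> J"
      using assms(2) by fastforce
    then have "i \<in> set w"
      using J assms(1,3) by (metis in_set_conv_nth length_words lessThan_iff order_less_le_trans subsetD)
    then have "i \<in> {1..n}"
      using assms(1) by (auto simp: words_def)
    then show "\<exists>i\<in>{1..n}. monochromatic_subsets j s w i \<noteq> {}"
      using \<open>monochromatic_subsets j s w i \<noteq> {}\<close> by blast
  qed auto
  finally show ?thesis
    unfolding monochromatic_count_ne_0_iff .
qed

definition monochromatic_mean :: "nat \<Rightarrow> nat \<Rightarrow> nat \<Rightarrow> nat \<Rightarrow> real" where
  "monochromatic_mean m n j s
     = real n * real (s choose j) * real (falling_fact m j) / real (falling_fact (m * n) j)"

lemma sum_monochromatic_count:
  assumes "j \<le> m" "1 \<le> n" "s \<le> m * n"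
  shows "(\<Sum>w\<in>words m n. real (monochromatic_count n j s w)) = card (words m n) * monochromatic_mean m n j s"
proof -
  have "(\<Sum>w\<in>words m n. monochromatic_count n j s w) * falling_fact (m * n) j
      = (\<Sum>i\<in>{1..n}. (\<Sum>w\<in>words m n. card (monochromatic_subsets j s w i)) * falling_fact (m * n) j)"
    unfolding monochromatic_count_def sum_distrib_right by (rule sum.swap)
  also have "\<dots> = (\<Sum>i\<in>{1..n}. (s choose j) * card (words m n) * falling_fact m j)"
    using assms by (intro sum.cong refl sum_card_monochromatic_subsets) auto
  finally have "(\<Sum>w\<in>words m n. monochromatic_count n j s w) * falling_fact (m * n) j
      = n * (s choose j) * card (words m n) * falling_fact m j"
    by simp
  from arg_cong[OF this, of real]
  have "(\<Sum>w\<in>words m n. real (monochromatic_count n j s w)) * real (falling_fact (m * n) j)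
      = real n * real (s choose j) * real (card (words m n)) * real (falling_fact m j)"
    by simp
  moreover have "j \<le> m * n"
    using assms(1,2) by (metis le_trans mult_le_mono2 mult_1_right)
  ultimately show ?thesis
    by (simp add: monochromatic_mean_def falling_fact_pos field_simps)
qed

lemma prob_repeat_le:
  assumes "1 \<le> j" "j \<le> m" "1 \<le> n" "s \<le> m * n"
  shows "measure_pmf.prob (pmf_of_set (words m n)) {w. \<exists>i. j \<le> count (mset (take s w)) i}
       \<le> monochromatic_mean m n j s"
proof -
  let ?W = "words m n"
  have "?W \<inter> {w. \<exists>i. j \<le> count (mset (take s w)) i} = {w \<in> ?W. monochromatic_count n j s w \<noteq> 0}"
    using repeat_iff_monochromatic_count assms(1,4) by blast
  then have "card (?W \<inter> {w. \<exists>i. j \<le> count (mset (take s w)) i}) \<le> (\<Sum>w\<in>?W. monochromatic_count n j s w)"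
    using card_nonzero_le_sum[OF finite_words] by metis
  then have "real (card (?W \<inter> {w. \<exists>i. j \<le> count (mset (take s w)) i}))
      \<le> card ?W * monochromatic_mean m n j s"
    by (metis sum_monochromatic_count[OF assms(2-4)] of_nat_le_iff of_nat_sum)
  then show ?thesis
    using finite_words words_nonempty by (simp add: prob_words field_simps card_gt_0_iff)
qed

lemma sum_product_monochromatic_subsets_le_real:
  assumes "j \<le> m" "s \<le> m * n" "4 * j \<le> m * n" "i \<in> {1..n}" "i' \<in> {1..n}" "i \<noteq> i'"
  shows "(\<Sum>w\<in>words m n. real (card (monochromatic_subsets j s w i)) * real (card (monochromatic_subsets j s w i')))
       \<le> card (words m n) * (real (s choose j) * real (falling_fact m j) / real (falling_fact (m * n) j))\<^sup>2
           * (1 + 2 ^ j * (2 * real j / real (m * n)))"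
    (is "?S \<le> ?N * (?C * ?f / ?F)\<^sup>2 * (1 + ?\<epsilon>)")
proof -
  have "?S * real (falling_fact (m * n) (2 * j)) \<le> ?C\<^sup>2 * ?N * ?f\<^sup>2"
    using of_nat_mono[OF sum_product_monochromatic_subsets_le[OF assms(2,1,4-6)], where 'a=real]
    by simp
  moreover have square: "?F\<^sup>2 \<le> real (falling_fact (m * n) (2 * j)) * (1 + ?\<epsilon>)"
    using falling_fact_square_le[OF assms(3)] by simp
  moreover have "0 < 1 + ?\<epsilon>"
    by (simp add: add_pos_nonneg)
  moreover have "0 < falling_fact (m * n) (2 * j)"
    using assms(3) by (simp add: falling_fact_pos)
  ultimately have "?S \<le> ?C\<^sup>2 * ?N * ?f\<^sup>2 * (1 + ?\<epsilon>) / (real (falling_fact (m * n) (2 * j)) * (1 + ?\<epsilon>))"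
    by (simp add: pos_le_divide_eq)
  also have "\<dots> \<le> ?C\<^sup>2 * ?N * ?f\<^sup>2 * (1 + ?\<epsilon>) / ?F\<^sup>2"
    using square \<open>0 < 1 + ?\<epsilon>\<close> assms(3) by (intro divide_left_mono) (simp_all add: falling_fact_pos)
  finally show ?thesis
    by (simp add: power_divide power_mult_distrib mult_ac)
qed

lemma sum_square_monochromatic_count_le:
  assumes "j \<le> m" "1 \<le> n" "s \<le> m * n" "4 * j \<le> m * n"
  defines "\<mu> \<equiv> monochromatic_mean m n j s" and "\<epsilon> \<equiv> 2 ^ j * (2 * real j / real (m * n))"
  shows "(\<Sum>w\<in>words m n. real (monochromatic_count n j s w) ^ 2)
       \<le> card (words m n) * (real (m choose j) * \<mu> + (1 + \<epsilon>) * \<mu>\<^sup>2)"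
proof -
  let ?W = "words m n"
  let ?Y = "\<lambda>i w. real (card (monochromatic_subsets j s w i))"
  define N where "N = real (card ?W)"
  define q where "q = real (s choose j) * real (falling_fact m j) / real (falling_fact (m * n) j)"
  have \<mu>_eq: "\<mu> = real n * q"
    by (simp add: \<mu>_def q_def monochromatic_mean_def)
  have sum_Y: "(\<Sum>w\<in>?W. ?Y i w) = N * q" if "i \<in> {1..n}" for i
  proof -
    have "(\<Sum>w\<in>?W. ?Y i w) * real (falling_fact (m * n) j)
        = real (s choose j) * N * real (falling_fact m j)"
      using arg_cong[OF sum_card_monochromatic_subsets[OF assms(3,1) that], of real]
      by (simp add: N_def)
    moreover have "0 < falling_fact (m * n) j"
      using assms(4) by (simp add: falling_fact_pos)
    ultimately show ?thesis
      by (simp add: q_def field_simps)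
  qed
  have bound: "(\<Sum>w\<in>?W. ?Y i w * ?Y i' w)
      \<le> (if i = i' then real (m choose j) * (N * q) else 0) + N * q\<^sup>2 * (1 + \<epsilon>)"
    if i: "i \<in> {1..n}" and i': "i' \<in> {1..n}" for i i'
  proof (cases "i = i'")
    case True
    have "(\<Sum>w\<in>?W. ?Y i w * ?Y i w) \<le> (\<Sum>w\<in>?W. real (m choose j) * ?Y i w)"
      using card_monochromatic_subsets_le i assms(3) by (intro sum_mono mult_right_mono) auto
    also have "\<dots> = real (m choose j) * (N * q)"
      by (simp add: sum_Y[OF i] flip: sum_distrib_left)
    moreover have "0 \<le> N * q\<^sup>2 * (1 + \<epsilon>)"
      by (simp add: \<epsilon>_def N_def)
    ultimately show ?thesis
      using True by simp
  next
    case False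
    then show ?thesis
      using sum_product_monochromatic_subsets_le_real[OF assms(1,3,4) i i'] by (simp add: N_def q_def \<epsilon>_def)
  qed
  have "(\<Sum>w\<in>?W. real (monochromatic_count n j s w) ^ 2)
      = (\<Sum>w\<in>?W. \<Sum>i\<in>{1..n}. \<Sum>i'\<in>{1..n}. ?Y i w * ?Y i' w)"
    by (simp add: monochromatic_count_def power2_eq_square sum_product)
  also have "\<dots> = (\<Sum>i\<in>{1..n}. \<Sum>w\<in>?W. \<Sum>i'\<in>{1..n}. ?Y i w * ?Y i' w)"
    by (rule sum.swap)
  also have "\<dots> = (\<Sum>i\<in>{1..n}. \<Sum>i'\<in>{1..n}. \<Sum>w\<in>?W. ?Y i w * ?Y i' w)"
    by (intro sum.cong refl) (rule sum.swap)
  also have "\<dots> \<le> (\<Sum>i\<in>{1..n}. \<Sum>i'\<in>{1..n}.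
                    (if i = i' then real (m choose j) * (N * q) else 0) + N * q\<^sup>2 * (1 + \<epsilon>))"
    using bound by (intro sum_mono) simp
  also have "\<dots> = N * (real (m choose j) * \<mu> + (1 + \<epsilon>) * \<mu>\<^sup>2)"
    by (simp add: sum.distrib \<mu>_eq power2_eq_square algebra_simps)
  finally show ?thesis
    by (simp add: N_def)
qed

lemma prob_no_repeat_le:
  assumes "1 \<le> j" "j \<le> m" "j \<le> s" "s \<le> m * n" "4 * j \<le> m * n"
  shows "measure_pmf.prob (pmf_of_set (words m n)) {w. \<forall>i. count (mset (take s w)) i < j}
       \<le> real (m choose j) / monochromatic_mean m n j s + 2 ^ j * (2 * real j / real (m * n))"
proof -
  let ?W = "words m n"
  let ?X = "\<lambda>w. real (monochromatic_count n j s w)"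
  have "(\<forall>i. count (mset (take s w)) i < j) \<longleftrightarrow> ?X w = 0" if "w \<in> ?W" for w
    unfolding not_le[symmetric] using repeat_iff_monochromatic_count[OF that assms(1,4)] by auto
  then have event: "?W \<inter> {w. \<forall>i. count (mset (take s w)) i < j} = {w \<in> ?W. ?X w = 0}"
    by auto
  have "1 \<le> n"
    using assms(1,5) by (cases n) simp_all
  then have "0 < monochromatic_mean m n j s"
    using assms(2,3,5) by (simp add: monochromatic_mean_def falling_fact_pos)
  from card_zero_le_second_moment[OF finite_words this sum_monochromatic_count[OF assms(2) \<open>1 \<le> n\<close> assms(4)]
      sum_square_monochromatic_count_le[OF assms(2) \<open>1 \<le> n\<close> assms(4,5)]]
  show ?thesis
    using finite_words words_nonempty by (simp add: prob_words event field_simps card_gt_0_iff)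
qed

section \<open>Tail bounds\<close>

lemma powr_one_minus_inverse_power:
  fixes x :: real
  assumes "0 < x" "1 \<le> j"
  shows "(\<gamma> * x powr (1 - 1 / j)) ^ j * x = \<gamma> ^ j * x ^ j"
proof -
  have "real j * (1 - 1 / j) = real j - 1"
    using assms by (simp add: field_simps)
  then have "(x powr (1 - 1 / j)) ^ j = x powr (real j - 1)"
    using assms by (simp add: powr_power)
  also have "\<dots> * x = x ^ j"
    using assms by (simp add: powr_diff powr_realpow)
  finally show ?thesis
    by (simp add: power_mult_distrib)
qed

lemma binomial_le_power: "real (s choose j) \<le> real s ^ j"
  by (cases "j \<le> s") (simp_all add: binomial_le_pow binomial_eq_0 flip: of_nat_power)

lemma monochromatic_mean_le:
  assumes "1 \<le> j" "j \<le> m" "1 \<le> n" "real s \<le> \<gamma> * real n powr (1 - 1 / real j)"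
  shows "monochromatic_mean m n j s \<le> \<gamma> ^ j"
proof -
  let ?t = "\<gamma> * real n powr (1 - 1 / real j)"
  have "real (s choose j) \<le> ?t ^ j"
    using assms(4) by (intro order.trans[OF binomial_le_power power_mono]) simp_all
  moreover have "real (falling_fact m j) * real n ^ j \<le> real (falling_fact (m * n) j)"
    using falling_fact_mult_le[of m j n] by (simp flip: of_nat_power of_nat_mult)
  moreover have "0 < falling_fact (m * n) j"
    using assms(2,3) by (intro falling_fact_pos) (metis le_trans mult_le_mono2 mult_1_right)
  ultimately have "real (s choose j) * (real (falling_fact m j) / real (falling_fact (m * n) j))
      \<le> ?t ^ j * (1 / real n ^ j)"
    using assms(3) by (intro mult_mono) (simp_all add: field_simps)
  then have "real n * (real (s choose j) * (real (falling_fact m j) / real (falling_fact (m * n) j)))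
      \<le> real n * (?t ^ j * (1 / real n ^ j))"
    by (rule mult_left_mono) simp
  also have "\<dots> = \<gamma> ^ j"
    using powr_one_minus_inverse_power[of "real n" j \<gamma>] assms(1,3) by (simp add: field_simps)
  finally show ?thesis
    by (simp add: monochromatic_mean_def mult.assoc)
qed

lemma one_minus_prob_T_gt_le:
  assumes "1 \<le> j" "j \<le> m" "1 \<le> n" "0 < \<gamma>"
  defines "t \<equiv> \<gamma> * real n powr (1 - 1 / real j)"
  shows "1 - measure_pmf.prob (pmf_of_set (words m n)) {w. t < real (T j w)} \<le> \<gamma> ^ j"
proof -
  let ?prob = "measure_pmf.prob (pmf_of_set (words m n))"
  define s where "s = min (nat \<lfloor>t\<rfloor>) (m * n)"
  have "0 \<le> t"
    using assms(4) by (simp add: t_def)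
  have "(\<exists>i. j \<le> count (mset (take s w)) i) \<longleftrightarrow> \<not> t < real (T j w)" if "w \<in> words m n" for w
  proof -
    have "t < real (T j w) \<longleftrightarrow> (\<forall>i. count (mset (take s w)) i < j)"
      using T_gt_iff_no_repeat[OF that assms(1-3) \<open>0 \<le> t\<close>] take_words_min[OF that, of "nat \<lfloor>t\<rfloor>"]
      by (simp add: s_def)
    then show ?thesis
      by (auto simp: not_less)
  qed
  then have "words m n \<inter> {w. \<exists>i. j \<le> count (mset (take s w)) i}
      = words m n \<inter> (UNIV - {w. t < real (T j w)})"
    by blast
  then have "1 - ?prob {w. t < real (T j w)} = ?prob {w. \<exists>i. j \<le> count (mset (take s w)) i}"
    using measure_pmf.prob_compl[of "{w. t < real (T j w)}" "pmf_of_set (words m n)"]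
    by (simp add: prob_words)
  also have "\<dots> \<le> monochromatic_mean m n j s"
    using assms(1-3) by (intro prob_repeat_le) (simp_all add: s_def)
  also have "\<dots> \<le> \<gamma> ^ j"
  proof -
    have "s \<le> nat \<lfloor>t\<rfloor>"
      by (simp add: s_def)
    then have "real s \<le> t"
      using of_nat_floor[OF \<open>0 \<le> t\<close>] by (meson of_nat_le_iff order.trans)
    then show ?thesis
      unfolding t_def by (rule monochromatic_mean_le[OF assms(1-3)])
  qed
  finally show ?thesis .
qed

lemma monochromatic_mean_ge:
  fixes m n j s :: nat and \<gamma> :: real
  defines "t \<equiv> \<gamma> * real n powr (1 - 1 / real j)"
  assumes j: "1 \<le> j" "j \<le> m" and n: "1 \<le> n" and s: "j \<le> s" "t \<le> 2 * real s" and \<gamma>: "0 < \<gamma>"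
  shows "real (falling_fact m j) / (2 * real j * real m) ^ j * \<gamma> ^ j \<le> monochromatic_mean m n j s"
proof -
  have "0 \<le> t"
    using \<gamma> by (simp add: t_def)
  have "(t / (2 * real j)) ^ j \<le> (real s / real j) ^ j"
    using j s \<open>0 \<le> t\<close> by (intro power_mono) (simp_all add: field_simps)
  also have "\<dots> \<le> real (s choose j)"
    using binomial_ge_n_over_k_pow_k[OF s(1)] by simp
  finally have binomial: "(t / (2 * real j)) ^ j \<le> real (s choose j)" .
  have "j \<le> m * n"
    using j n by (metis le_trans mult_le_mono2 mult_1_right)
  then have falling: "0 < real (falling_fact (m * n) j)" "real (falling_fact (m * n) j) \<le> (real m * real n) ^ j"
    using falling_fact_le_power[of "m * n" j] by (simp_all add: falling_fact_pos flip: of_nat_mult of_nat_power)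
  have "real (falling_fact m j) / (2 * real j * real m) ^ j * \<gamma> ^ j
      = real n * (t / (2 * real j)) ^ j * real (falling_fact m j) / (real m * real n) ^ j"
    using powr_one_minus_inverse_power[of "real n" j \<gamma>] j n
    by (simp add: t_def field_simps) metis
  also have "\<dots> \<le> monochromatic_mean m n j s"
    unfolding monochromatic_mean_def
    using binomial falling \<open>0 \<le> t\<close> by (intro frac_le mult_mono mult_right_mono) simp_all
  finally show ?thesis .
qed

lemma second_moment_error_le:
  fixes m n j :: nat and \<gamma> :: real
  defines "t \<equiv> \<gamma> * real n powr (1 - 1 / real j)"
  assumes j: "1 \<le> j" and n: "1 \<le> n" and t: "t \<le> real (m * n)" and \<gamma>: "0 < \<gamma>"
  shows "2 ^ j * (2 * real j / real (m * n)) \<le> 2 ^ (j + 1) * real j * real m ^ j * (1 / \<gamma>) ^ j"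
proof -
  have "0 < t"
    using \<gamma> n by (simp add: t_def)
  have "\<gamma> ^ j * real n ^ j = t ^ j * real n"
    using powr_one_minus_inverse_power[of "real n" j \<gamma>] j n by (simp add: t_def)
  also have "\<dots> \<le> (real m * real n) ^ j * real n"
    using t \<open>0 < t\<close> by (intro mult_right_mono power_mono) simp_all
  also have "\<dots> = (real m ^ j * real n) * real n ^ j"
    by (simp add: power_mult_distrib)
  finally have \<gamma>_power: "\<gamma> ^ j \<le> real m ^ j * real n"
    using n by simp
  have "1 \<le> m"
  proof (rule ccontr)
    assume "\<not> 1 \<le> m"
    then have "m = 0"
      by simp
    then have "\<gamma> ^ j \<le> 0"
      using \<gamma>_power j by (simp add: power_0_left)
    with zero_less_power[OF \<gamma>, of j] show False
      by linarith
  qed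
  have "2 * real j / real (m * n) \<le> 2 * real j / real n"
    using \<open>1 \<le> m\<close> n by (intro divide_left_mono) simp_all
  also have "\<dots> \<le> 2 * real j * real m ^ j / \<gamma> ^ j"
    using \<gamma>_power \<gamma> n by (simp add: field_simps mult_left_mono)
  finally have "2 ^ j * (2 * real j / real (m * n)) \<le> 2 ^ j * (2 * real j * real m ^ j / \<gamma> ^ j)"
    by (rule mult_left_mono) simp
  also have "\<dots> = 2 ^ (j + 1) * real j * real m ^ j * (1 / \<gamma>) ^ j"
    by (simp add: power_one_over)
  finally show ?thesis .
qed

(* One summand for each regime in prob_T_gt_le: gamma < 2j, and the two terms of
   prob_no_repeat_le. *)
definition tail_constant :: "nat \<Rightarrow> nat \<Rightarrow> real" where
  "tail_constant m j = (2 * real j) ^ j + real (m choose j) * (2 * real j * real m) ^ j / real (falling_fact m j)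
                       + 2 ^ (j + 1) * real j * real m ^ j"

lemma one_le_tail_constant: "1 \<le> j \<Longrightarrow> 1 \<le> tail_constant m j"
  using one_le_power[of "2 * real j" j] unfolding tail_constant_def by (simp add: add_increasing2)

lemma prob_no_repeat_le_power:
  fixes m n j s :: nat and \<gamma> :: real
  defines "t \<equiv> \<gamma> * real n powr (1 - 1 / real j)"
  assumes j: "1 \<le> j" "j \<le> m" and n: "4 * j \<le> n" and \<gamma>: "0 < \<gamma>"
    and s: "j \<le> s" "s \<le> m * n" "t \<le> 2 * real s" "t \<le> real (m * n)"
  shows "measure_pmf.prob (pmf_of_set (words m n)) {w. \<forall>i. count (mset (take s w)) i < j}
       \<le> (real (m choose j) * (2 * real j * real m) ^ j / real (falling_fact m j)
          + 2 ^ (j + 1) * real j * real m ^ j) * (1 / \<gamma>) ^ j"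
proof -
  let ?K = "real (falling_fact m j) / (2 * real j * real m) ^ j"
  have "1 \<le> n"
    using j n by linarith
  have "4 * j \<le> m * n"
    using j n by (metis le_trans mult_le_mono2 mult.commute mult_1_right)
  have "0 < falling_fact m j"
    using j by (simp add: falling_fact_pos)
  then have "0 < ?K * \<gamma> ^ j"
    using j \<gamma> by simp
  moreover have \<mu>: "?K * \<gamma> ^ j \<le> monochromatic_mean m n j s"
    using monochromatic_mean_ge[OF j \<open>1 \<le> n\<close> s(1) _ \<gamma>] s(3) by (simp add: t_def)
  ultimately have "real (m choose j) / monochromatic_mean m n j s \<le> real (m choose j) / (?K * \<gamma> ^ j)"
    by (intro divide_left_mono mult_pos_pos[of "monochromatic_mean m n j s"]) simp_all
  moreover have "2 ^ j * (2 * real j / real (m * n)) \<le> 2 ^ (j + 1) * real j * real m ^ j * (1 / \<gamma>) ^ j"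
    using second_moment_error_le[OF j(1) \<open>1 \<le> n\<close> s(4)[unfolded t_def] \<gamma>] .
  moreover have "measure_pmf.prob (pmf_of_set (words m n)) {w. \<forall>i. count (mset (take s w)) i < j}
      \<le> real (m choose j) / monochromatic_mean m n j s + 2 ^ j * (2 * real j / real (m * n))"
    using j s(1,2) \<open>4 * j \<le> m * n\<close> by (rule prob_no_repeat_le)
  moreover have "real (m choose j) / (?K * \<gamma> ^ j)
      = real (m choose j) * (2 * real j * real m) ^ j / real (falling_fact m j) * (1 / \<gamma>) ^ j"
    using \<open>0 < falling_fact m j\<close> \<gamma> j by (simp add: field_simps)
  ultimately show ?thesis
    by (simp add: distrib_right)
qed

lemma prob_T_gt_le:
  fixes m n j :: nat and \<gamma> :: real
  defines "t \<equiv> \<gamma> * real n powr (1 - 1 / real j)"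
  assumes j: "1 \<le> j" "j \<le> m" and n: "4 * j \<le> n" and \<gamma>: "0 < \<gamma>"
  shows "measure_pmf.prob (pmf_of_set (words m n)) {w. t < real (T j w)} \<le> tail_constant m j * (1 / \<gamma>) ^ j"
proof -
  let ?prob = "measure_pmf.prob (pmf_of_set (words m n))"
  define s where "s = nat \<lfloor>t\<rfloor>"
  have "1 \<le> n"
    using j n by linarith
  have "1 \<le> real n powr (1 - 1 / real j)"
    using \<open>1 \<le> n\<close> j by (intro ge_one_powr_ge_zero) simp_all
  then have "\<gamma> \<le> t"
    using \<gamma> by (simp add: t_def mult_le_cancel_left1)
  have P_eq: "?prob {w. t < real (T j w)} = ?prob {w. \<forall>i. count (mset (take s w)) i < j}"
    unfolding s_def using j \<open>1 \<le> n\<close> \<gamma> \<open>\<gamma> \<le> t\<close> by (intro prob_T_gt_eq) simp_all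
  have "0 \<le> real (m choose j) * (2 * real j * real m) ^ j / real (falling_fact m j)"
    by simp
  then have le_tail_constant: "(c + real (m choose j) * (2 * real j * real m) ^ j / real (falling_fact m j)
      + 2 ^ (j + 1) * real j * real m ^ j) * (1 / \<gamma>) ^ j \<le> tail_constant m j * (1 / \<gamma>) ^ j"
    if "0 \<le> c" "c \<le> (2 * real j) ^ j" for c
    using that \<gamma> by (intro mult_right_mono) (simp_all add: tail_constant_def)
  consider "\<gamma> < 2 * real j" | "m * n \<le> s" | "2 * real j \<le> \<gamma>" "s < m * n"
    by linarith
  then show ?thesis
  proof cases
    case 1
    have "?prob {w. t < real (T j w)} \<le> (2 * real j / \<gamma>) ^ j"
      using 1 \<gamma> by (intro order.trans[OF measure_pmf.prob_le_1 one_le_power]) simp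
    also have "\<dots> = ((2 * real j) ^ j + 0 + 0) * (1 / \<gamma>) ^ j"
      by (simp add: power_divide power_one_over)
    also have "\<dots> \<le> tail_constant m j * (1 / \<gamma>) ^ j"
      using le_tail_constant[of "(2 * real j) ^ j"] \<gamma> by (simp add: tail_constant_def)
    finally show ?thesis .
  next
    case 2
    have "\<not> count (mset (take s w)) 1 < j" if "w \<in> words m n" for w
      using that 2 j \<open>1 \<le> n\<close> by (simp add: length_words words_def)
    then have "words m n \<inter> {w. \<forall>i. count (mset (take s w)) i < j} = {}"
      by blast
    then have "?prob {w. t < real (T j w)} = 0"
      using P_eq by (simp add: prob_words)
    then show ?thesis
      using one_le_tail_constant[OF j(1), of m] \<gamma> by simp
  next
    case 3
    have "2 * real j \<le> t" "t < real s + 1"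
      using 3 \<open>\<gamma> \<le> t\<close> unfolding s_def by linarith+
    moreover have "1 \<le> real j"
      using j by simp
    moreover have "real (Suc s) \<le> real (m * n)"
      using 3 by (simp only: of_nat_le_iff Suc_le_eq)
    ultimately have "t \<le> 2 * real s" "real j \<le> real s" "t \<le> real (m * n)"
      by linarith+
    then have "?prob {w. \<forall>i. count (mset (take s w)) i < j}
        \<le> (0 + real (m choose j) * (2 * real j * real m) ^ j / real (falling_fact m j)
          + 2 ^ (j + 1) * real j * real m ^ j) * (1 / \<gamma>) ^ j"
      using prob_no_repeat_le_power[OF j n \<gamma>, of s] 3 by (simp add: t_def)
    also have "\<dots> \<le> tail_constant m j * (1 / \<gamma>) ^ j"
      by (rule le_tail_constant) simp_all
    finally show ?thesis
      using P_eq by simp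
  qed
qed

theorem lemma2p1:
  fixes m j :: nat
  assumes "1 \<le> j" and "j \<le> m"
  shows "\<exists>C>0. \<exists>N. \<forall>n\<ge>N. \<forall>\<gamma>::real. \<gamma> > 0 \<longrightarrow>
           (let t = \<gamma> * real n powr (1 - 1 / real j);
                P = measure_pmf.prob (pmf_of_set (words m n)) {w. real (T j w) > t}
            in \<bar>1 - P\<bar> \<le> C * \<gamma> ^ j \<and> P \<le> C * (1 / \<gamma>) ^ j)"
proof -
  let ?C = "tail_constant m j"
  have "\<bar>1 - P\<bar> \<le> ?C * \<gamma> ^ j \<and> P \<le> ?C * (1 / \<gamma>) ^ j"
    if "4 * j \<le> n" "0 < \<gamma>"
      and "P = measure_pmf.prob (pmf_of_set (words m n)) {w. \<gamma> * real n powr (1 - 1 / real j) < real (T j w)}"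
    for n \<gamma> P
  proof -
    have "1 \<le> n"
      using assms(1) that(1) by linarith
    have "\<bar>1 - P\<bar> = 1 - P"
      using that(3) measure_pmf.prob_le_1 by simp
    also have "\<dots> \<le> \<gamma> ^ j"
      using one_minus_prob_T_gt_le[OF assms \<open>1 \<le> n\<close> that(2)] that(3) by simp
    also have "\<dots> \<le> ?C * \<gamma> ^ j"
      using one_le_tail_constant[OF assms(1), of m] that(2) by simp
    finally show ?thesis
      using prob_T_gt_le[OF assms that(1,2)] that(3) by simp
  qed
  then show ?thesis
    using one_le_tail_constant[OF assms(1), of m] by (intro exI[of _ ?C] exI[of _ "4 * j"]) (auto simp: Let_def)
qed

end
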